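(* For $a\in(0,1)$ and $x\in[0,1]$ define $$I(a,x):=-\int_0^{\pi}\operatorname{Im}\Bigl\{w_{a,x}(t)\Bigr\}\,\frac{dt}{\sqrt{a+1/a-2\cos t}},$$ where, with $z=e^{it}$, $w_{a,x}(t)=z^{1/4}\left(\frac{1-az}{z-a}\right)^{1/4}\left(\frac{z+x}{xz+1}\right)^{1/2}$, each root being the continuous branch along $t\in[0,\pi]$ taking the value $1$ at $t=0$. Let $\alpha\in(0,1)$ be the unique zero of $a\mapsto I(a,0)$ in $(0,1)$, and for each $a\in(0,\alpha)$ let $x_a\in(0,1)$ be the unique value of $x$ with $I(a,x_a)=0$. Then $\lim_{a\to0}x_a=1$.
   Context: It is established (independently of this statement) that $I(a,x)$ is increasing in $x$, that $a\mapsto I(a,0)$ has exactly one zero $\alpha$ in $(0,1)$, and that for each $a\in(0,\alpha)$ there is a unique $x_a\in(0,1)$ with $I(a,x_a)=0$. *)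

theory Defs
  imports "HOL-Analysis.Analysis"
begin

text \<open>Continuous branch along t in [0,pi) of the n-th root of g(t), taking value 1 at t = 0.
  Outside [0,pi) the function is set to 0 (so that it is uniquely determined);
  the single point t = pi is irrelevant for the integral.\<close>
definition cbranch :: "nat \<Rightarrow> (real \<Rightarrow> complex) \<Rightarrow> real \<Rightarrow> complex" where
  "cbranch n g = (THE h. continuous_on {0..<pi} h \<and> h 0 = 1
       \<and> (\<forall>s\<in>{0..<pi}. h s ^ n = g s) \<and> (\<forall>s. s \<notin> {0..<pi} \<longrightarrow> h s = 0))"

definition wfun :: "real \<Rightarrow> real \<Rightarrow> real \<Rightarrow> complex" where
  "wfun a x t =
     cbranch 4 (\<lambda>s. cis s) t
   * cbranch 4 (\<lambda>s. (1 - of_real a * cis s) / (cis s - of_real a)) t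
   * cbranch 2 (\<lambda>s. (cis s + of_real x) / (of_real x * cis s + 1)) t"

definition Ifun :: "real \<Rightarrow> real \<Rightarrow> real" where
  "Ifun a x = - integral {0..pi} (\<lambda>t. Im (wfun a x t) / sqrt (a + 1/a - 2 * cos t))"

end

theory Submission
  imports Defs
begin

text \<open>
  For \<open>8 a \<le> 1 - x\<close> the integrand of \<open>Ifun a x\<close> is positive on \<open>(0, \<pi>)\<close>, so
  \<open>Ifun a x < 0\<close>; hence every zero satisfies \<open>x\<^sub>a > 1 - 8 a\<close>, and \<open>x\<^sub>a \<rightarrow> 1\<close>.
  On \<open>[0, \<pi>)\<close> the branches in \<open>wfun\<close> are explicit: with \<open>z = e\<^sup>i\<^sup>t\<close>,
  \<open>u = 1 - a z\<close> and the ellipse point \<open>P = (1 + x) cos (t/2) + i (1 - x) sin (t/2)\<close> one has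
  \<open>(1 - a z) / (z - a) = z\<^sup>* (u/|u|)\<^sup>2\<close> and \<open>(z + x) / (x z + 1) = P / P\<^sup>*\<close>, so
  \<open>w = \<surd>(u/|u|) \<cdot> P/|P|\<close>. Since \<open>arg u \<in> (-\<pi>/2, 0]\<close>, halving it only helps, and
  \<open>Im w > 0\<close> reduces to \<open>Im (u P) \<ge> 0\<close>, an elementary trigonometric inequality that holds
  when \<open>8 a \<le> 1 - x\<close>.
\<close>

lemma continuous_nth_roots_eq_on_connected:
  fixes h k :: "'a::topological_space \<Rightarrow> complex"
  assumes "connected S" "continuous_on S h" "continuous_on S k" "n > 0"
    and h_nz: "\<And>s. s \<in> S \<Longrightarrow> h s \<noteq> 0"
    and pow_eq: "\<And>s. s \<in> S \<Longrightarrow> k s ^ n = h s ^ n"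
    and "s0 \<in> S" "k s0 = h s0" "s \<in> S"
  shows "k s = h s"
proof -
  define q where "q s = k s / h s" for s
  have "continuous_on S q"
    unfolding q_def using assms by (intro continuous_intros) auto
  moreover have "q ` S \<subseteq> {z. z ^ n = 1}"
    using pow_eq h_nz by (auto simp: q_def power_divide)
  then have "finite (q ` S)"
    by (rule finite_subset) (use \<open>n > 0\<close> finite_roots_unity in auto)
  ultimately have "q constant_on S"
    using \<open>connected S\<close> by (intro continuous_finite_range_constant)
  then have "q s = q s0"
    using \<open>s \<in> S\<close> \<open>s0 \<in> S\<close> by (auto simp: constant_on_def)
  then show ?thesis
    using \<open>k s0 = h s0\<close> h_nz[OF \<open>s0 \<in> S\<close>] h_nz[OF \<open>s \<in> S\<close>] by (simp add: q_def)
qed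

lemma cbranch_eqI:
  fixes h :: "real \<Rightarrow> complex"
  assumes "n > 0" "continuous_on {0..<pi} h" "h 0 = 1"
    and "\<And>s. s \<in> {0..<pi} \<Longrightarrow> h s ^ n = g s"
    and "\<And>s. s \<in> {0..<pi} \<Longrightarrow> h s \<noteq> 0"
    and "t \<in> {0..<pi}"
  shows "cbranch n g t = h t"
proof -
  let ?branch = "\<lambda>k. continuous_on {0..<pi} k \<and> k 0 = 1
       \<and> (\<forall>s\<in>{0..<pi}. k s ^ n = g s) \<and> (\<forall>s. s \<notin> {0..<pi} \<longrightarrow> k s = 0)"
  define H where "H s = (if s \<in> {0..<pi} then h s else 0)" for s
  have "continuous_on {0..<pi} H"
    using assms(2) by (rule continuous_on_eq) (simp add: H_def)
  then have "?branch H"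
    using assms by (auto simp: H_def)
  moreover have "k = H" if "?branch k" for k
  proof
    fix s
    have "k s = h s" if "s \<in> {0..<pi}"
      using continuous_nth_roots_eq_on_connected[of "{0..<pi}" h k n 0 s] \<open>?branch k\<close> assms that
      by (auto simp: is_interval_connected)
    then show "k s = H s"
      using \<open>?branch k\<close> by (auto simp: H_def)
  qed
  ultimately have "cbranch n g = H"
    unfolding cbranch_def by (rule the_equality)
  then show ?thesis
    using assms(6) by (simp add: H_def)
qed

lemma sgn_power2_eq_divide_cnj: "sgn u ^ 2 = u / cnj (u :: complex)"
proof (cases "u = 0")
  case False
  have "sgn u ^ 2 = u ^ 2 / (u * cnj u)"
    by (simp add: sgn_eq power_divide complex_norm_square[symmetric])
  then show ?thesis
    using False by (simp add: power2_eq_square)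
qed simp

lemma Re_power2_mult_Im_mult:
  fixes s v :: complex
  shows "Re (s\<^sup>2) * Im (s * v) = Re s * Im (s\<^sup>2 * v) - Im s * Re v * cmod (s\<^sup>2)"
proof -
  have "cmod (s\<^sup>2) = (Re s)\<^sup>2 + (Im s)\<^sup>2"
    by (simp add: norm_power cmod_power2)
  then show ?thesis
    by (simp add: Re_power2 Im_power2 algebra_simps power2_eq_square)
qed

lemma Im_csqrt_mult_pos:
  assumes "0 < Re w" "Im w < 0" "0 < Re v" "0 \<le> Im (w * v)"
  shows "0 < Im (csqrt w * v)"
proof -
  define s where "s = csqrt w"
  have w: "w = s\<^sup>2"
    by (simp add: s_def)
  have "0 < Re s"
    using assms(1) abs_Re_le_cmod[of w] by (simp add: s_def)
  moreover have "2 * Re s * Im s < 0"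
    using Im_power2[of s] assms(2) by (simp add: w)
  ultimately have "Im s < 0"
    by (simp add: mult_less_0_iff)
  moreover have "0 < cmod w"
    using assms(1) by auto
  ultimately have "0 < Re s * Im (w * v) - Im s * Re v * cmod w"
    using assms(3,4) \<open>0 < Re s\<close>
    by (smt (verit) mult_neg_pos mult_nonneg_nonneg mult_pos_pos)
  then have "0 < Re w * Im (s * v)"
    unfolding w Re_power2_mult_Im_mult by simp
  then show ?thesis
    using assms(1) by (simp add: s_def zero_less_mult_iff del: csqrt.simps)
qed

lemma inv_blaschke_eq_cnj_cis_mult_sgn_power2:
  "(1 - of_real a * cis t) / (cis t - of_real a) = cnj (cis t) * sgn (1 - of_real a * cis t) ^ 2"
proof -
  have "cis t - of_real a = cis t * cnj (1 - of_real a * cis t)"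
    by (simp add: algebra_simps cis_cnj cis_mult)
  then show ?thesis
    by (simp add: sgn_power2_eq_divide_cnj divide_inverse cis_cnj mult.commute)
qed

definition ellipse_point :: "real \<Rightarrow> real \<Rightarrow> complex" where
  "ellipse_point x t = Complex ((1 + x) * cos (t/2)) ((1 - x) * sin (t/2))"

lemma ellipse_point_eq: "ellipse_point x t = cis (t/2) + of_real x * cnj (cis (t/2))"
  by (simp add: ellipse_point_def complex_eq_iff algebra_simps)

lemma cis_add_eq_cis_half_mult_ellipse_point:
  "cis t + of_real x = cis (t/2) * ellipse_point x t"
  "of_real x * cis t + 1 = cis (t/2) * cnj (ellipse_point x t)"
  by (simp_all add: ellipse_point_eq algebra_simps cis_cnj cis_mult)

lemma moebius_eq_sgn_ellipse_point_power2:
  "(cis t + of_real x) / (of_real x * cis t + 1) = sgn (ellipse_point x t) ^ 2"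
  by (simp add: cis_add_eq_cis_half_mult_ellipse_point sgn_power2_eq_divide_cnj)

lemma ellipse_point_nonzero:
  assumes "\<bar>x\<bar> < 1"
  shows "ellipse_point x t \<noteq> 0"
proof
  assume "ellipse_point x t = 0"
  then have "cos (t/2) = 0" "sin (t/2) = 0"
    using assms by (auto simp: ellipse_point_def complex_eq_iff)
  then show False
    using sin_cos_squared_add[of "t/2"] by simp
qed

lemma cbranch_cis_quarter:
  assumes "t \<in> {0..<pi}"
  shows "cbranch 4 (\<lambda>s. cis s) t = cis (t/4)"
proof (rule cbranch_eqI)
  show "continuous_on {0..<pi} (\<lambda>s. cis (s/4))"
    by (intro continuous_intros) auto
qed (use assms in \<open>auto simp: Complex.DeMoivre\<close>)

lemma Re_one_minus_cis_pos:
  assumes "\<bar>a\<bar> < 1"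
  shows "0 < Re (1 - of_real a * cis t)"
proof -
  have "\<bar>a * cos t\<bar> \<le> \<bar>a\<bar>"
    by (simp add: abs_mult mult_left_le abs_cos_le_one)
  then show ?thesis
    using assms by simp
qed

lemma Re_sgn_one_minus_cis_pos:
  assumes "\<bar>a\<bar> < 1"
  shows "0 < Re (sgn (1 - of_real a * cis t))"
proof -
  have "0 < Re (1 - of_real a * cis t)"
    using assms by (rule Re_one_minus_cis_pos)
  moreover from this have "0 < cmod (1 - of_real a * cis t)"
    using complex_Re_le_cmod by (rule less_le_trans)
  ultimately show ?thesis
    unfolding Re_sgn by (rule divide_pos_pos)
qed

lemma continuous_on_csqrt_sgn_one_minus_cis:
  assumes "\<bar>a\<bar> < 1"
  shows "continuous_on S (\<lambda>t. csqrt (sgn (1 - of_real a * cis t)))"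
proof (rule continuous_on_compose2[OF continuous_on_csqrt])
  show "continuous_on S (\<lambda>t. sgn (1 - of_real a * cis t))"
    using Re_one_minus_cis_pos[OF assms] by (intro continuous_intros) (metis zero_complex.sel(1) less_irrefl)
  have "sgn (1 - of_real a * cis t) \<notin> \<real>\<^sub>\<le>\<^sub>0" for t
    using Re_sgn_one_minus_cis_pos[OF assms, of t] by (simp add: complex_nonpos_Reals_iff del: Re_sgn)
  then show "(\<lambda>t. sgn (1 - of_real a * cis t)) ` S \<subseteq> - \<real>\<^sub>\<le>\<^sub>0"
    by blast
qed

lemma cbranch_inv_blaschke_quarter:
  assumes "\<bar>a\<bar> < 1" "t \<in> {0..<pi}"
  shows "cbranch 4 (\<lambda>s. (1 - of_real a * cis s) / (cis s - of_real a)) t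
           = cis (-t/4) * csqrt (sgn (1 - of_real a * cis t))"
proof (rule cbranch_eqI)
  show "continuous_on {0..<pi} (\<lambda>s. cis (-s/4) * csqrt (sgn (1 - of_real a * cis s)))"
    using continuous_on_csqrt_sgn_one_minus_cis[OF assms(1)] by (intro continuous_intros) auto
  have "1 - of_real a = (of_real (1 - a) :: complex)"
    by simp
  then show "cis (-0/4) * csqrt (sgn (1 - of_real a * cis 0)) = 1"
    using assms(1) by (simp only: cis_zero mult_1_right sgn_of_real) simp
  fix s
  have "csqrt w ^ 4 = w ^ 2" for w :: complex
    by (metis power2_csqrt power_mult num_double numeral_times_numeral)
  then show "(cis (-s/4) * csqrt (sgn (1 - of_real a * cis s))) ^ 4
      = (1 - of_real a * cis s) / (cis s - of_real a)"
    by (simp add: power_mult_distrib Complex.DeMoivre inv_blaschke_eq_cnj_cis_mult_sgn_power2 cis_cnj)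
  show "cis (-s/4) * csqrt (sgn (1 - of_real a * cis s)) \<noteq> 0"
    using Re_sgn_one_minus_cis_pos[OF assms(1), of s]
    by (metis cis_neq_zero csqrt_eq_0 mult_eq_0_iff zero_complex.sel(1) less_irrefl)
qed (use assms in auto)

lemma cbranch_moebius_half:
  assumes "\<bar>x\<bar> < 1" "t \<in> {0..<pi}"
  shows "cbranch 2 (\<lambda>s. (cis s + of_real x) / (of_real x * cis s + 1)) t
           = sgn (ellipse_point x t)"
proof (rule cbranch_eqI)
  have "continuous_on {0..<pi} (ellipse_point x)"
    unfolding ellipse_point_eq by (intro continuous_intros) auto
  then show "continuous_on {0..<pi} (\<lambda>s. sgn (ellipse_point x s))"
    using ellipse_point_nonzero[OF assms(1)] by (intro continuous_intros) auto
  have "ellipse_point x 0 = of_real (1 + x)"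
    by (simp add: ellipse_point_def complex_eq_iff)
  then have "sgn (ellipse_point x 0) = of_real (sgn (1 + x))"
    by (simp only: sgn_of_real)
  then show "sgn (ellipse_point x 0) = 1"
    using assms(1) by simp
  fix s
  show "sgn (ellipse_point x s) ^ 2 = (cis s + of_real x) / (of_real x * cis s + 1)"
    by (simp add: moebius_eq_sgn_ellipse_point_power2)
  show "sgn (ellipse_point x s) \<noteq> 0"
    using ellipse_point_nonzero[OF assms(1)] by (simp add: sgn_zero_iff)
qed (use assms in simp_all)

definition w_closed_form :: "real \<Rightarrow> real \<Rightarrow> real \<Rightarrow> complex" where
  "w_closed_form a x t = csqrt (sgn (1 - of_real a * cis t)) * sgn (ellipse_point x t)"

lemma wfun_eq_w_closed_form:
  assumes "\<bar>a\<bar> < 1" "\<bar>x\<bar> < 1" "t \<in> {0..<pi}"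
  shows "wfun a x t = w_closed_form a x t"
proof -
  have "wfun a x t = (cis (t/4) * cis (-t/4)) * w_closed_form a x t"
    unfolding wfun_def w_closed_form_def
    by (simp only: assms cbranch_cis_quarter cbranch_inv_blaschke_quarter cbranch_moebius_half mult.assoc)
  also have "cis (t/4) * cis (-t/4) = 1"
    by (simp add: cis_mult)
  finally show ?thesis
    by simp
qed

lemma continuous_on_w_closed_form:
  assumes "\<bar>a\<bar> < 1" "\<bar>x\<bar> < 1"
  shows "continuous_on S (w_closed_form a x)"
proof -
  have "continuous_on S (ellipse_point x)"
    unfolding ellipse_point_eq by (intro continuous_intros) auto
  then show ?thesis
    unfolding w_closed_form_def using ellipse_point_nonzero[OF assms(2)]
    by (intro continuous_intros continuous_on_csqrt_sgn_one_minus_cis assms(1)) auto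
qed

lemma Im_one_minus_cis_mult_ellipse_point_nonneg:
  assumes "0 \<le> a" "0 \<le> x" "8 * a \<le> 1 - x" "0 \<le> t" "t \<le> pi"
  shows "0 \<le> Im ((1 - of_real a * cis t) * ellipse_point x t)"
proof -
  have "2 * a * (1 + x) * (cos (t/2))\<^sup>2 \<le> 2 * a * 2 * 1"
    using assms(1-3) by (intro mult_mono) (auto simp: abs_square_le_1)
  also have "\<dots> \<le> (1 - x) * (1 - a)"
    using mult_mono[of "8 * a" "1 - x" "1/2" "1 - a"] assms(1-3) by simp
  also have "\<dots> \<le> (1 - x) * (1 - a * cos t)"
    using assms(1-3) by (intro mult_left_mono) (auto simp: mult_left_le)
  finally have "0 \<le> sin (t/2) * ((1 - x) * (1 - a * cos t) - 2 * a * (1 + x) * (cos (t/2))\<^sup>2)"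
    using assms(4,5) by (intro mult_nonneg_nonneg sin_ge_zero) auto
  also have "\<dots> = Im ((1 - of_real a * cis t) * ellipse_point x t)"
    using sin_double[of "t/2"] by (simp add: ellipse_point_def algebra_simps power2_eq_square)
  finally show ?thesis .
qed

lemma Im_w_closed_form_pos:
  assumes "0 < a" "0 \<le> x" "8 * a \<le> 1 - x" "0 < t" "t < pi"
  shows "0 < Im (w_closed_form a x t)"
  unfolding w_closed_form_def
proof (rule Im_csqrt_mult_pos)
  have "\<bar>a\<bar> < 1"
    using assms by simp
  then show "0 < Re (sgn (1 - of_real a * cis t))"
    by (rule Re_sgn_one_minus_cis_pos)
  have "0 < cmod (1 - of_real a * cis t)"
    using Re_one_minus_cis_pos[OF \<open>\<bar>a\<bar> < 1\<close>] complex_Re_le_cmod by (rule less_le_trans)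
  then show "Im (sgn (1 - of_real a * cis t)) < 0"
    using assms sin_gt_zero[of t] by (simp add: divide_neg_pos)
  show "0 < Re (sgn (ellipse_point x t))"
    using assms cos_gt_zero[of "t/2"] ellipse_point_nonzero[of x t]
    by (auto simp: ellipse_point_def)
  have "0 \<le> Im (sgn ((1 - of_real a * cis t) * ellipse_point x t))"
    using Im_one_minus_cis_mult_ellipse_point_nonneg[of a x t] assms by simp
  then show "0 \<le> Im (sgn (1 - of_real a * cis t) * sgn (ellipse_point x t))"
    by (simp only: sgn_mult)
qed

lemma Ifun_neg:
  assumes "0 < a" "0 \<le> x" "8 * a \<le> 1 - x"
  shows "Ifun a x < 0"
proof -
  have a: "\<bar>a\<bar> < 1" and x: "\<bar>x\<bar> < 1"
    using assms by auto
  have denom_pos: "0 < a + 1/a - 2 * cos t" for t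
  proof -
    have "0 < (1 - a)\<^sup>2 / a"
      using assms a by simp
    also have "\<dots> = a + 1/a - 2"
      using assms by (simp add: field_simps power2_eq_square)
    finally show ?thesis
      using cos_le_one[of t] by linarith
  qed
  define g where "g t = Im (w_closed_form a x t) / sqrt (a + 1/a - 2 * cos t)" for t
  have "continuous_on {0..pi} g"
    unfolding g_def using denom_pos continuous_on_w_closed_form[OF a x]
    by (intro continuous_intros) (auto simp: less_le)
  moreover have "0 < g t" if "t \<in> {0<..<pi}" for t
    using Im_w_closed_form_pos[OF assms] that denom_pos by (simp add: g_def)
  ultimately have "integral {0..pi} (\<lambda>_. 0) < integral {0..pi} g"
    by (intro integral_less_real) (auto simp: not_le)
  also have "integral {0..pi} g = integral {0..pi} (\<lambda>t. Im (wfun a x t) / sqrt (a + 1/a - 2 * cos t))"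
    by (rule integral_spike[of "{pi}"]) (auto simp: g_def wfun_eq_w_closed_form[OF a x])
  finally show ?thesis
    by (simp add: Ifun_def)
qed

theorem lemma6p1:
  fixes \<alpha> :: real and xa :: "real \<Rightarrow> real"
  assumes alpha: "0 < \<alpha>" "\<alpha> < 1" "Ifun \<alpha> 0 = 0"
    and alpha_unique: "\<And>a. 0 < a \<Longrightarrow> a < 1 \<Longrightarrow> Ifun a 0 = 0 \<Longrightarrow> a = \<alpha>"
    and xa: "\<And>a. 0 < a \<Longrightarrow> a < \<alpha> \<Longrightarrow> 0 < xa a \<and> xa a < 1 \<and> Ifun a (xa a) = 0"
    and xa_unique: "\<And>a x. 0 < a \<Longrightarrow> a < \<alpha> \<Longrightarrow> 0 < x \<Longrightarrow> x < 1 \<Longrightarrow> Ifun a x = 0 \<Longrightarrow> x = xa a"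
  shows "(xa \<longlongrightarrow> 1) (at_right 0)"
proof (rule tendsto_sandwich)
  have small: "\<forall>\<^sub>F a in at_right 0. 0 < a \<and> a < \<alpha>"
    unfolding eventually_at_right[OF alpha(1)] using alpha(1) by blast
  then show "\<forall>\<^sub>F a in at_right 0. 1 - 8 * a \<le> xa a"
  proof (rule eventually_mono)
    fix a :: real
    assume a: "0 < a \<and> a < \<alpha>"
    then have "0 < xa a" "Ifun a (xa a) = 0"
      using xa by auto
    then have "\<not> 8 * a \<le> 1 - xa a"
      using Ifun_neg[of a "xa a"] a by auto
    then show "1 - 8 * a \<le> xa a"
      by simp
  qed
  show "\<forall>\<^sub>F a in at_right 0. xa a \<le> 1"
    using small by (rule eventually_mono) (simp add: xa less_imp_le)
  have "((\<lambda>a. 1 - 8 * a) \<longlongrightarrow> 1 - 8 * 0) (at_right (0::real))"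
    by (intro tendsto_intros)
  then show "((\<lambda>a. 1 - 8 * a) \<longlongrightarrow> 1) (at_right (0::real))"
    by simp
qed simp

end
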